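(* Let $b\in(0,1)$ and $\delta\in[0,\tfrac13)$. Let $\mu$ be a nonnegative Borel measure on $[0,\infty)$ such that $-K_0'(t)=\int_0^\infty e^{-tx}\,\mathrm{d}\mu(x)$ for a function $K_0:(0,\infty)\to\mathbb{R}$ (so $-K_0'$ is completely monotone), and set $\lambda_{n,b}=2\int_0^\infty\phi_n(bx)\,\frac{\mathrm{d}\mu(x)}{x}$, where $\phi_n(x)=\int_0^\pi e^{-2x\sin\eta}e^{2in\eta}\,\mathrm{d}\eta$. Let $\Psi_k$ be defined by $\Psi_0(x)=\frac{x}{1+x^2}$ and $\Psi_{k+1}(x)=\frac{x^2}{4(1+x^2)}\big(\Psi_k''(x)+\frac1x\Psi_k'(x)\big)$ for $k\in\mathbb{N}$. Then for all $n\ge1$ and $N\ge0$: (1) for all $x>0$, $\phi_n(x)=\sum_{k=0}^N\frac{1}{n^{2k+1}}\Psi_k(\tfrac xn)+\tfrac1n g_{n,N}(\tfrac xn)$ with $\big|\tfrac1n g_{n,N}(\tfrac xn)\big|\le\frac{C_{N,\delta}}{n^{2N+\frac53}}\frac{x^\delta}{1+\frac xn}$; (2) $\lambda_{n,b}=2\sum_{k=0}^N\frac{1}{n^{2k+1}}\int_0^\infty\Psi_k(\tfrac{bx}{n})\,\frac{\mathrm{d}\mu(x)}{x}+\varepsilon_{n,N}$ with $|\varepsilon_{n,N}|\le\frac{C_{N,\delta}}{n^{2N+\frac53}}\int_0^\infty\frac{x^{\delta-1}}{1+\frac{bx}{n}}\,\mathrm{d}\mu(x)$, where $C_{N,\delta}>0$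 depends only on $N$ and $\delta$.
   Context: In (1), $g_{n,N}$ is the function defined by $\varphi_n(y)=\sum_{k=0}^N n^{-2k}\Psi_k(y)+g_{n,N}(y)$ where $\varphi_n(y)=n\phi_n(ny)$; thus (1) is an identity defining the remainder together with the stated bound. A function is completely monotone if it is $C^\infty$ on $(0,\infty)$ with $(-1)^nf^{(n)}\ge0$ for all $n\ge0$. *)

theory Defs
  imports "HOL-Analysis.Analysis"
begin

definition phi :: "nat \<Rightarrow> real \<Rightarrow> complex" where
  "phi n x = integral {0..pi}
     (\<lambda>\<eta>. complex_of_real (exp (- 2 * x * sin \<eta>)) * exp (2 * \<i> * of_nat n * complex_of_real \<eta>))"

fun Psi :: "nat \<Rightarrow> real \<Rightarrow> real" where
  "Psi 0 = (\<lambda>x. x / (1 + x\<^sup>2))"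
| "Psi (Suc k) = (\<lambda>x. x\<^sup>2 / (4 * (1 + x\<^sup>2)) *
       (deriv (deriv (Psi k)) x + deriv (Psi k) x / x))"

definition lambda_nb :: "real measure \<Rightarrow> nat \<Rightarrow> real \<Rightarrow> complex" where
  "lambda_nb M n b = 2 * (\<integral>x. phi n (b * x) / complex_of_real x \<partial>M)"

end

(*
  The sine part of phi_n vanishes by the symmetry eta -> pi - eta, so phi_n = u_n with
  u_n(x) = int_0^pi exp(-2x sin eta) cos(2n eta) d eta, and one integration by parts shows
  x^2 u'' + x u' - 4 (x^2 + n^2) u = -4x.  The recursion for Psi_k is exactly what makes the
  rescaled terms T_k(x) = Psi_k(x/n) / n^(2k+1) satisfy x^2 T_k'' + x T_k' = 4 (x^2 + n^2) T_(k+1),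
  while 4 (x^2 + n^2) T_0 = 4x.  Hence the remainder r = u_n - sum_(k<=N) T_k solves the same
  equation with right-hand side -4 (x^2 + n^2) T_(N+1) = O(x n^(-2N-2)).  A minimum principle
  for this modified Bessel operator, with the supersolution T_0 = x / (x^2 + n^2) for comparison,
  gives |r| <= C n^(-2N-2) x / (x^2 + n^2) <= C' n^(-2N-3-delta) x^delta / (1 + x/n), which is (1).
  Statement (2) follows by applying (1) at bx and integrating against d mu(x) / x.
*)

theory Submission
  imports Defs "HOL-Computational_Algebra.Polynomial" "HOL-Real_Asymp.Real_Asymp"
begin

section \<open>Psi as a rational function\<close>

definition deriv_numer :: "nat \<Rightarrow> real poly \<Rightarrow> real poly" where
  "deriv_numer m S = pderiv S * [:1, 0, 1:] - smult (2 * real m) (pCons 0 S)"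

lemma has_real_derivative_poly_over_power:
  "((\<lambda>y. poly S y / (1 + y\<^sup>2) ^ m) has_real_derivative
     poly (deriv_numer m S) y / (1 + y\<^sup>2) ^ Suc m) (at y)"
proof -
  define Q where "Q = 1 + y\<^sup>2"
  have Q: "Q > 0"
    unfolding Q_def by (simp add: add_pos_nonneg)
  have dQ: "((\<lambda>y. 1 + y\<^sup>2) has_real_derivative 2 * y) (at y)"
    by (auto intro!: derivative_eq_intros)
  from DERIV_divide[OF poly_DERIV DERIV_power[OF dQ, of m]]
  have "((\<lambda>y. poly S y / (1 + y\<^sup>2) ^ m) has_real_derivative
     (poly (pderiv S) y * Q ^ m - poly S y * (real m * (2 * y * Q ^ (m - 1)))) / (Q ^ m * Q ^ m)) (at y)"
    using Q by (simp add: Q_def)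
  moreover have "(poly (pderiv S) y * Q ^ m - poly S y * (real m * (2 * y * Q ^ (m - 1)))) / (Q ^ m * Q ^ m)
      = (poly (pderiv S) y * Q - poly S y * (real m * (2 * y))) / Q ^ Suc m"
  proof (cases m)
    case (Suc j)
    have "Q ^ j > 0"
      using Q by simp
    with Q show ?thesis
      by (simp add: Suc field_simps)
  qed (use Q in \<open>simp add: field_simps\<close>)
  ultimately show ?thesis
    by (simp add: deriv_numer_def Q_def algebra_simps power2_eq_square)
qed

lemma deriv_poly_over_power:
  "deriv (\<lambda>y. poly S y / (1 + y\<^sup>2) ^ m) = (\<lambda>y. poly (deriv_numer m S) y / (1 + y\<^sup>2) ^ Suc m)"
  using has_real_derivative_poly_over_power[THEN DERIV_imp_deriv] by (rule ext)

lemma degree_deriv_numer: "degree (deriv_numer m S) \<le> degree S + 1"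
proof -
  have "degree (pderiv S * [:1, 0, 1:]) \<le> degree S + 1"
  proof (cases "degree S = 0")
    case True
    then have "pderiv S = 0"
      by (simp add: pderiv_eq_0_iff)
    then show ?thesis
      by simp
  next
    case False
    then show ?thesis
      using degree_mult_le[of "pderiv S" "[:1, 0, 1:]"] degree_pderiv[of S] by simp
  qed
  moreover have "degree (smult (2 * real m) (pCons 0 S)) \<le> degree S + 1"
    using degree_smult_le[of "2 * real m" "pCons 0 S"] degree_pCons_le[of 0 S] by linarith
  ultimately show ?thesis
    unfolding deriv_numer_def by (rule degree_diff_le)
qed

fun Psi_numer :: "nat \<Rightarrow> real poly" where
  "Psi_numer 0 = [:0, 1:]"
| "Psi_numer (Suc k) = pCons 0 (smult (1/4)
     (pCons 0 (deriv_numer (3*k+2) (deriv_numer (3*k+1) (Psi_numer k)))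
      + deriv_numer (3*k+1) (Psi_numer k) * [:1, 0, 1:]))"

lemma coeff_0_Psi_numer: "coeff (Psi_numer k) 0 = 0"
  by (cases k) simp_all

lemma degree_Psi_numer: "degree (Psi_numer k) \<le> 6*k + 1"
proof (induction k)
  case (Suc k)
  let ?S1 = "deriv_numer (3*k+1) (Psi_numer k)"
  let ?S2 = "deriv_numer (3*k+2) ?S1"
  have "degree ?S1 \<le> 6*k + 2"
    using degree_deriv_numer[of "3*k+1" "Psi_numer k"] Suc by simp
  then have "degree (pCons 0 ?S2) \<le> 6*k + 4" and "degree (?S1 * [:1, 0, 1:]) \<le> 6*k + 4"
    using degree_deriv_numer[of "3*k+2" ?S1] degree_pCons_le[of 0 ?S2]
      degree_mult_le[of ?S1 "[:1, 0, 1:]"] by auto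
  then have "degree (smult (1/4) (pCons 0 ?S2 + ?S1 * [:1, 0, 1:])) \<le> 6*k + 4"
    using degree_add_le degree_smult_le order_trans by blast
  then show ?case
    using degree_pCons_le order_trans by fastforce
qed simp

lemma Psi_eq_poly_over_power: "Psi k = (\<lambda>y. poly (Psi_numer k) y / (1 + y\<^sup>2) ^ (3*k + 1))"
proof (induction k)
  case (Suc k)
  define S1 where "S1 = deriv_numer (3*k+1) (Psi_numer k)"
  define S2 where "S2 = deriv_numer (3*k+2) S1"
  have d1: "deriv (Psi k) = (\<lambda>y. poly S1 y / (1 + y\<^sup>2) ^ (3*k + 2))"
    unfolding Suc.IH deriv_poly_over_power S1_def by simp
  have d2: "deriv (deriv (Psi k)) = (\<lambda>y. poly S2 y / (1 + y\<^sup>2) ^ Suc (3*k + 2))"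
    unfolding d1 deriv_poly_over_power S2_def ..
  show ?case
  proof
    fix y :: real
    define Q where "Q = 1 + y\<^sup>2"
    have "Q > 0" "Q ^ (3*k) > 0"
      unfolding Q_def by (simp_all add: add_pos_nonneg)
    have "Psi (Suc k) y = y\<^sup>2 / (4 * Q) * (poly S2 y / Q ^ Suc (3*k + 2) + poly S1 y / Q ^ (3*k + 2) / y)"
      unfolding Psi.simps(2) d2 unfolding d1 Q_def ..
    also have "\<dots> = y * (1/4) * (y * poly S2 y + poly S1 y * Q) / Q ^ (3 * Suc k + 1)"
    proof (cases "y = 0")
      case False
      have "Q ^ Suc (3*k + 2) = Q ^ (3*k) * Q ^ 3" "Q ^ (3*k + 2) = Q ^ (3*k) * Q\<^sup>2"
        "Q ^ (3 * Suc k + 1) = Q ^ (3*k) * Q ^ 4"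
        by (simp_all add: power_add power3_eq_cube power4_eq_xxxx power2_eq_square mult_ac)
      with False \<open>Q > 0\<close> \<open>Q ^ (3*k) > 0\<close> show ?thesis
        by (simp add: field_simps power2_eq_square power3_eq_cube power4_eq_xxxx)
    qed simp
    also have "\<dots> = poly (Psi_numer (Suc k)) y / (1 + y\<^sup>2) ^ (3 * Suc k + 1)"
      by (simp add: S1_def S2_def Q_def algebra_simps power2_eq_square)
    finally show "Psi (Suc k) y = poly (Psi_numer (Suc k)) y / (1 + y\<^sup>2) ^ (3 * Suc k + 1)" .
  qed
qed (simp add: fun_eq_iff)

lemma abs_poly_le_one_plus_square_power:
  fixes y :: real
  assumes "y > 0" "coeff S 0 = 0" "degree S \<le> 2*j + 1"
  shows "\<bar>poly S y\<bar> \<le> (\<Sum>i\<le>degree S. \<bar>coeff S i\<bar>) * (y * (1 + y\<^sup>2) ^ j)"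
proof -
  have "\<bar>coeff S i * y ^ i\<bar> \<le> \<bar>coeff S i\<bar> * (y * (1 + y\<^sup>2) ^ j)" if "i \<le> degree S" for i
  proof (cases i)
    case (Suc l)
    have "y ^ l \<le> (1 + y\<^sup>2) ^ j"
    proof (cases "y \<le> 1")
      case True
      then have "y ^ l \<le> 1"
        using assms(1) by (simp add: power_le_one)
      moreover have "1 \<le> (1 + y\<^sup>2) ^ j"
        by (simp add: one_le_power)
      ultimately show ?thesis
        by linarith
    next
      case False
      then have "y ^ l \<le> (y\<^sup>2) ^ j"
        using Suc that assms(3) by (simp add: power_increasing flip: power_mult)
      also have "\<dots> \<le> (1 + y\<^sup>2) ^ j"
        by (simp add: power_mono)
      finally show ?thesis .
    qed
    then show ?thesis
      using assms(1) by (simp add: Suc abs_mult mult_left_mono)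
  qed (use assms(2) in simp)
  then have "(\<Sum>i\<le>degree S. \<bar>coeff S i * y ^ i\<bar>) \<le> (\<Sum>i\<le>degree S. \<bar>coeff S i\<bar> * (y * (1 + y\<^sup>2) ^ j))"
    by (intro sum_mono) simp
  then show ?thesis
    by (simp add: poly_altdef sum_distrib_right order_trans[OF sum_abs])
qed

lemma abs_Psi_le: "\<exists>A\<ge>0. \<forall>y>0. \<bar>Psi k y\<bar> \<le> A * y / (1 + y\<^sup>2)"
proof (intro exI conjI allI impI)
  let ?A = "\<Sum>i\<le>degree (Psi_numer k). \<bar>coeff (Psi_numer k) i\<bar>"
  show "?A \<ge> 0"
    by (simp add: sum_nonneg)
  fix y :: real
  assume "y > 0"
  have "(1 + y\<^sup>2) ^ (3*k) > 0"
    by (simp add: add_pos_nonneg)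
  have "\<bar>Psi k y\<bar> = \<bar>poly (Psi_numer k) y\<bar> / ((1 + y\<^sup>2) ^ (3*k) * (1 + y\<^sup>2))"
    by (simp add: Psi_eq_poly_over_power abs_div)
  also have "\<dots> \<le> ?A * (y * (1 + y\<^sup>2) ^ (3*k)) / ((1 + y\<^sup>2) ^ (3*k) * (1 + y\<^sup>2))"
    using abs_poly_le_one_plus_square_power[OF \<open>y > 0\<close> coeff_0_Psi_numer[of k], of "3*k"] degree_Psi_numer[of k]
    by (intro divide_right_mono) simp_all
  also have "\<dots> = ?A * y / (1 + y\<^sup>2)"
    using \<open>(1 + y\<^sup>2) ^ (3*k) > 0\<close> by simp
  finally show "\<bar>Psi k y\<bar> \<le> ?A * y / (1 + y\<^sup>2)" .
qed

lemma has_real_derivative_Psi: "(Psi k has_real_derivative deriv (Psi k) y) (at y)"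
  unfolding Psi_eq_poly_over_power deriv_poly_over_power by (rule has_real_derivative_poly_over_power)

lemma has_real_derivative_deriv_Psi:
  "(deriv (Psi k) has_real_derivative deriv (deriv (Psi k)) y) (at y)"
  unfolding Psi_eq_poly_over_power deriv_poly_over_power by (rule has_real_derivative_poly_over_power)

lemma isCont_Psi: "isCont (Psi k) y"
  using has_real_derivative_Psi DERIV_isCont by blast

lemma Psi_measurable [measurable]: "Psi k \<in> borel_measurable borel"
  by (intro borel_measurable_continuous_onI continuous_at_imp_continuous_on ballI isCont_Psi)

lemma Psi_at_0: "Psi k 0 = 0"
  by (simp add: Psi_eq_poly_over_power poly_0_coeff_0 coeff_0_Psi_numer)

lemma Psi_tendsto_0_at_top: "(Psi k \<longlongrightarrow> 0) at_top"
proof -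
  obtain A where A: "\<forall>y>0. \<bar>Psi k y\<bar> \<le> A * y / (1 + y\<^sup>2)"
    using abs_Psi_le by blast
  have "eventually (\<lambda>y. norm (Psi k y) \<le> A * y / (1 + y\<^sup>2)) at_top"
    using eventually_gt_at_top[of "0::real"] by eventually_elim (use A in auto)
  moreover have "((\<lambda>y. A * y / (1 + y\<^sup>2)) \<longlongrightarrow> 0) at_top"
    by real_asymp
  ultimately show ?thesis
    by (rule Lim_null_comparison)
qed

lemma Psi_Suc_eq:
  "y \<noteq> 0 \<Longrightarrow> 4 * (1 + y\<^sup>2) * Psi (Suc k) y = y\<^sup>2 * deriv (deriv (Psi k)) y + y * deriv (Psi k) y"
  by (simp add: field_simps power2_eq_square add_nonneg_eq_0_iff)

declare Psi.simps(2) [simp del]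

lemma Psi_1_le:
  assumes "y > 0"
  shows "(1 + y\<^sup>2) * Psi 1 y \<le> y / 4"
proof -
  have Q: "1 + y\<^sup>2 > 0"
    by (simp add: add_pos_nonneg)
  have "(1 + y\<^sup>2) * Psi 1 y = poly (Psi_numer 1) y / (1 + y\<^sup>2) ^ 3"
  proof -
    have "(1 + y\<^sup>2) ^ 4 = (1 + y\<^sup>2) * (1 + y\<^sup>2) ^ 3"
      by (simp add: eval_nat_numeral)
    with Q show ?thesis
      by (simp add: Psi_eq_poly_over_power del: Psi_numer.simps)
  qed
  also have "\<dots> = y * (1 - 6 * y\<^sup>2 + y ^ 4) / (4 * (1 + y\<^sup>2) ^ 3)"
    using Q by (simp add: deriv_numer_def pderiv_pCons field_simps power2_eq_square power4_eq_xxxx)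
  also have "\<dots> \<le> y * (1 + y\<^sup>2) ^ 3 / (4 * (1 + y\<^sup>2) ^ 3)"
    using assms Q by (intro divide_right_mono mult_left_mono)
      (auto simp: power2_eq_square power3_eq_cube power4_eq_xxxx algebra_simps)
  also have "\<dots> = y / 4"
    using Q by simp
  finally show ?thesis .
qed

section \<open>The integral phi and its differential equation\<close>

text \<open>Differentiation in \<open>x\<close> only changes the weight \<open>w\<close>, so \<open>u\<^sub>n\<close> and its first two
  derivatives are all of this form.\<close>
definition phi_weighted :: "(real \<Rightarrow> real) \<Rightarrow> nat \<Rightarrow> real \<Rightarrow> real" where
  "phi_weighted w n x = integral {0..pi} (\<lambda>t. w t * exp (- 2 * x * sin t) * cos (2 * real n * t))"

lemma has_integral_phi_weighted:
  assumes "continuous_on {0..pi} w"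
  shows "((\<lambda>t. w t * exp (- 2 * x * sin t) * cos (2 * real n * t)) has_integral phi_weighted w n x) {0..pi}"
  unfolding phi_weighted_def
  by (intro integrable_integral integrable_continuous_interval continuous_intros assms)

lemma has_real_derivative_phi_weighted:
  assumes "continuous_on UNIV w"
  shows "(phi_weighted w n has_real_derivative phi_weighted (\<lambda>t. - 2 * sin t * w t) n x) (at x)"
proof -
  have "continuous_on (UNIV \<times> cbox 0 pi) (\<lambda>p. w (snd p))"
    by (rule continuous_on_compose2[OF assms continuous_on_snd]) auto
  then have "((\<lambda>x. integral (cbox 0 pi) (\<lambda>t. w t * exp (- 2 * x * sin t) * cos (2 * real n * t)))
      has_field_derivative integral (cbox 0 pi) (\<lambda>t. - 2 * sin t * w t * exp (- 2 * x * sin t) * cos (2 * real n * t)))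
      (at x within UNIV)"
    using assms
    by (intro leibniz_rule_field_derivative)
      (auto intro!: derivative_eq_intros integrable_continuous_interval continuous_intros
        continuous_on_subset[OF assms] simp: split_beta)
  then show ?thesis
    by (simp add: phi_weighted_def[abs_def])
qed

lemma has_real_derivative_phi_weighted_1:
  "(phi_weighted (\<lambda>_. 1) n has_real_derivative phi_weighted (\<lambda>t. - 2 * sin t) n x) (at x)"
  using has_real_derivative_phi_weighted[of "\<lambda>_. 1"] by simp

lemma has_real_derivative_phi_weighted_2:
  "(phi_weighted (\<lambda>t. - 2 * sin t) n has_real_derivative phi_weighted (\<lambda>t. 4 * (sin t)\<^sup>2) n x) (at x)"
  using has_real_derivative_phi_weighted[of "\<lambda>t. - 2 * sin t"]
  by (simp add: continuous_intros power2_eq_square)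

lemma integral_0_pi_antisymmetric:
  fixes g :: "real \<Rightarrow> real"
  assumes "\<And>t. g (pi - t) = - g t"
  shows "integral {0..pi} g = 0"
proof -
  have "integral {0..pi} g = integral {-pi..0} (\<lambda>t. g (- t))"
    using Henstock_Kurzweil_Integration.integral_reflect_real[of pi 0 g] by simp
  also have "\<dots> = integral {0..pi} (\<lambda>t. g (pi - t))"
    using integral_shift_real_ivl[where a="-pi" and b=0 and c="-pi" and f="\<lambda>t. g (- t)"] by simp
  also have "\<dots> = - integral {0..pi} g"
    by (simp add: assms integral_neg)
  finally show ?thesis
    by simp
qed

lemma phi_eq_phi_weighted: "phi n x = of_real (phi_weighted (\<lambda>_. 1) n x)"
proof -
  define E where "E t = exp (- 2 * x * sin t)" for t
  have "integral {0..pi} (\<lambda>t. E t * sin (2 * real n * t)) = 0"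
  proof (rule integral_0_pi_antisymmetric)
    fix t
    have "sin (2 * real n * (pi - t)) = sin (real (2 * n) * pi - 2 * real n * t)"
      by (simp add: algebra_simps)
    then show "E (pi - t) * sin (2 * real n * (pi - t)) = - (E t * sin (2 * real n * t))"
      by (simp add: E_def sin_diff)
  qed
  moreover have "(\<lambda>t. E t * sin (2 * real n * t)) integrable_on {0..pi}"
    by (simp add: E_def integrable_continuous_interval continuous_intros)
  ultimately have "((\<lambda>t. complex_of_real (E t * sin (2 * real n * t))) has_integral 0) {0..pi}"
    using has_integral_of_real[OF integrable_integral] by fastforce
  from has_integral_add[OF has_integral_of_real[OF has_integral_phi_weighted[of "\<lambda>_. 1" x n]]
      has_integral_mult_right[OF this, of \<i>]]
  have "((\<lambda>t. complex_of_real (E t * cos (2 * real n * t)) + \<i> * complex_of_real (E t * sin (2 * real n * t)))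
      has_integral complex_of_real (phi_weighted (\<lambda>_. 1) n x)) {0..pi}"
    by (simp add: E_def)
  moreover have "complex_of_real (exp (- 2 * x * sin t)) * exp (2 * \<i> * of_nat n * complex_of_real t)
      = complex_of_real (E t * cos (2 * real n * t)) + \<i> * complex_of_real (E t * sin (2 * real n * t))" for t
    using cis_conv_exp[of "2 * real n * t"] by (simp add: E_def cis.ctr complex_eq_iff mult_ac)
  ultimately show ?thesis
    unfolding phi_def by (simp add: integral_unique)
qed

lemma has_integral_0_pi_of_derivative:
  fixes F :: "real \<Rightarrow> real"
  assumes "\<And>t. (F has_real_derivative F' t) (at t)"
  shows "(F' has_integral (F pi - F 0)) {0..pi}"
  by (intro fundamental_theorem_of_calculus)
    (auto simp flip: has_real_derivative_iff_has_vector_derivative intro: has_field_derivative_at_within assms)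

lemma phi_weighted_ode:
  "x\<^sup>2 * phi_weighted (\<lambda>t. 4 * (sin t)\<^sup>2) n x + x * phi_weighted (\<lambda>t. - 2 * sin t) n x
     - 4 * (x\<^sup>2 + (real n)\<^sup>2) * phi_weighted (\<lambda>_. 1) n x = - 4 * x"
proof -
  define E where "E t = exp (- 2 * x * sin t)" for t
  define c where "c t = cos (2 * real n * t)" for t
  define s where "s t = sin (2 * real n * t)" for t
  define G where "G t = 2 * x * cos t * E t * c t - 2 * real n * E t * s t" for t
  \<comment> \<open>\<open>G'\<close> is the integrand below, so the equation is a single integration by parts.\<close>
  have by_parts: "((\<lambda>t. (4 * x\<^sup>2 * (sin t)\<^sup>2 - 2 * x * sin t - 4 * (x\<^sup>2 + (real n)\<^sup>2)) * E t * c t)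
      has_integral (G pi - G 0)) {0..pi}"
  proof (rule has_integral_0_pi_of_derivative)
    fix t
    have dE: "(E has_real_derivative - 2 * x * cos t * E t) (at t)"
      unfolding E_def by (auto intro!: derivative_eq_intros)
    have dc: "(c has_real_derivative - 2 * real n * s t) (at t)"
      unfolding c_def s_def by (auto intro!: derivative_eq_intros)
    have ds: "(s has_real_derivative 2 * real n * c t) (at t)"
      unfolding c_def s_def by (auto intro!: derivative_eq_intros)
    have "(G has_real_derivative
        2 * x * cos t * E t * (- 2 * real n * s t)
          + (2 * x * cos t * (- 2 * x * cos t * E t) + 2 * x * (- sin t) * E t) * c t
        - (2 * real n * E t * (2 * real n * c t) + 2 * real n * (- 2 * x * cos t * E t) * s t)) (at t)"
      (is "(G has_real_derivative ?D) _")
      unfolding G_def by (intro DERIV_diff DERIV_mult' DERIV_cmult DERIV_cos dE dc ds)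
    moreover have "?D = (4 * x\<^sup>2 * (sin t)\<^sup>2 - 2 * x * sin t - 4 * (x\<^sup>2 + (real n)\<^sup>2)) * E t * c t"
      unfolding sin_squared_eq by algebra
    ultimately show "(G has_real_derivative
        (4 * x\<^sup>2 * (sin t)\<^sup>2 - 2 * x * sin t - 4 * (x\<^sup>2 + (real n)\<^sup>2)) * E t * c t) (at t)"
      by simp
  qed
  have boundary: "G pi - G 0 = - 4 * x"
    by (simp add: G_def E_def c_def s_def)
  have "continuous_on {0..pi} (\<lambda>t::real. 4 * (sin t)\<^sup>2)" "continuous_on {0..pi} (\<lambda>t::real. - 2 * sin t)"
    "continuous_on {0..pi} (\<lambda>t::real. 1)"
    by (intro continuous_intros)+
  note has_integral_mult_right[OF has_integral_phi_weighted[OF this(1)], of "x\<^sup>2" x n]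
    has_integral_mult_right[OF has_integral_phi_weighted[OF this(2)], of x x n]
    has_integral_mult_right[OF has_integral_phi_weighted[OF this(3)], of "4 * (x\<^sup>2 + (real n)\<^sup>2)" x n]
  from has_integral_diff[OF has_integral_add[OF this(1,2)] this(3)]
  have "((\<lambda>t. (4 * x\<^sup>2 * (sin t)\<^sup>2 - 2 * x * sin t - 4 * (x\<^sup>2 + (real n)\<^sup>2)) * E t * c t)
      has_integral x\<^sup>2 * phi_weighted (\<lambda>t. 4 * (sin t)\<^sup>2) n x + x * phi_weighted (\<lambda>t. - 2 * sin t) n x
        - 4 * (x\<^sup>2 + (real n)\<^sup>2) * phi_weighted (\<lambda>_. 1) n x) {0..pi}"
    by (simp add: E_def c_def algebra_simps)
  from has_integral_unique[OF this by_parts] show ?thesis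
    by (simp only: boundary)
qed

lemma phi_weighted_at_0:
  assumes "n \<ge> 1"
  shows "phi_weighted (\<lambda>_. 1) n 0 = 0"
proof -
  have "((\<lambda>t. cos (2 * real n * t)) has_integral
      sin (2 * real n * pi) / (2 * real n) - sin (2 * real n * 0) / (2 * real n)) {0..pi}"
    by (rule has_integral_0_pi_of_derivative) (use assms in \<open>auto intro!: derivative_eq_intros\<close>)
  then show ?thesis
    by (simp add: phi_weighted_def integral_unique)
qed

lemma phi_weighted_sin_square_le:
  assumes "x > 0"
  shows "phi_weighted (\<lambda>t. 4 * (sin t)\<^sup>2) 0 x \<le> 2 * pi / x"
proof -
  define E where "E t = exp (- 2 * x * sin t)" for t
  have "4 * (sin t)\<^sup>2 * E t \<le> 2 / x" if "t \<in> {0..pi}" for t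
  proof -
    have "0 \<le> sin t" "sin t \<le> 1"
      using that by (auto simp: sin_ge_zero)
    have "2 * x * sin t \<le> exp (2 * x * sin t)"
      using exp_ge_add_one_self[of "2 * x * sin t"] by linarith
    then have "2 * x * (sin t * E t) \<le> 1"
      by (simp add: E_def exp_minus field_simps)
    moreover have "sin t * sin t \<le> sin t"
      using \<open>0 \<le> sin t\<close> \<open>sin t \<le> 1\<close> by (simp add: mult_left_le_one_le)
    then have "(sin t)\<^sup>2 * E t \<le> sin t * E t"
      by (simp add: E_def power2_eq_square mult_right_mono)
    then have "2 * x * ((sin t)\<^sup>2 * E t) \<le> 2 * x * (sin t * E t)"
      using assms by (intro mult_left_mono) auto
    ultimately have "2 * x * ((sin t)\<^sup>2 * E t) \<le> 1"
      by linarith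
    then show ?thesis
      using assms by (simp add: field_simps)
  qed
  then have "integral {0..pi} (\<lambda>t. 4 * (sin t)\<^sup>2 * E t) \<le> integral {0..pi} (\<lambda>_. 2 / x)"
    by (intro integral_le) (auto simp: E_def intro!: integrable_continuous_interval continuous_intros)
  then show ?thesis
    by (simp add: phi_weighted_def E_def mult.commute)
qed

text \<open>The case \<open>n = 0\<close> of the differential equation bounds
  \<open>\<integral>\<^sub>0\<^sup>\<pi> exp (-2 x sin t) dt\<close>.\<close>

lemma abs_phi_weighted_le:
  assumes "x > 0"
  shows "\<bar>phi_weighted (\<lambda>_. 1) n x\<bar> \<le> 3 / x"
proof -
  define E where "E t = exp (- 2 * x * sin t)" for t
  have int: "f integrable_on {0..pi}" if "continuous_on {0..pi} f" for f :: "real \<Rightarrow> real"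
    using that by (rule integrable_continuous_interval)
  have bound_by_n0: "\<bar>phi_weighted (\<lambda>_. 1) n x\<bar> \<le> phi_weighted (\<lambda>_. 1) 0 x"
    unfolding phi_weighted_def real_norm_def[symmetric]
    by (rule integral_norm_bound_integral) (auto intro!: int continuous_intros simp: abs_mult)
  have "phi_weighted (\<lambda>t. - 2 * sin t) 0 x \<le> 0"
    using integral_le[of "\<lambda>t. - 2 * sin t * E t" "{0..pi}" "\<lambda>_. 0"]
    by (simp add: phi_weighted_def E_def int continuous_intros sin_ge_zero)
  then have U1: "x * phi_weighted (\<lambda>t. - 2 * sin t) 0 x \<le> 0"
    using assms by (simp add: mult_nonneg_nonpos)
  have "phi_weighted (\<lambda>t. 4 * (sin t)\<^sup>2) 0 x \<le> 2 * pi / x"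
    using assms by (rule phi_weighted_sin_square_le)
  then have U2: "x\<^sup>2 * phi_weighted (\<lambda>t. 4 * (sin t)\<^sup>2) 0 x \<le> x\<^sup>2 * (2 * pi / x)"
    by (rule mult_left_mono) simp_all
  have "x\<^sup>2 * phi_weighted (\<lambda>t. 4 * (sin t)\<^sup>2) 0 x + x * phi_weighted (\<lambda>t. - 2 * sin t) 0 x
      - 4 * x\<^sup>2 * phi_weighted (\<lambda>_. 1) 0 x = - 4 * x"
    using phi_weighted_ode[of x 0] by simp
  then have "4 * x\<^sup>2 * phi_weighted (\<lambda>_. 1) 0 x \<le> x\<^sup>2 * (2 * pi / x) + 4 * x"
    using U1 U2 by linarith
  moreover have "4 * x\<^sup>2 * \<bar>phi_weighted (\<lambda>_. 1) n x\<bar> \<le> 4 * x\<^sup>2 * phi_weighted (\<lambda>_. 1) 0 x"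
    using bound_by_n0 by (simp add: mult_left_mono)
  ultimately have "4 * x\<^sup>2 * \<bar>phi_weighted (\<lambda>_. 1) n x\<bar> \<le> x\<^sup>2 * (2 * pi / x) + 4 * x"
    by linarith
  moreover have "x\<^sup>2 * (2 * pi / x) + 4 * x = x * (2 * pi + 4)"
    "4 * x\<^sup>2 * \<bar>phi_weighted (\<lambda>_. 1) n x\<bar> = x * (4 * x * \<bar>phi_weighted (\<lambda>_. 1) n x\<bar>)"
    using assms by (simp_all add: power2_eq_square field_simps)
  ultimately have "4 * x * \<bar>phi_weighted (\<lambda>_. 1) n x\<bar> \<le> 2 * pi + 4"
    using assms by simp
  then show ?thesis
    using assms pi_less_4 by (simp add: field_simps)
qed

lemma phi_weighted_tendsto_0_at_top: "(phi_weighted (\<lambda>_. 1) n \<longlongrightarrow> 0) at_top"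
proof -
  have "eventually (\<lambda>x. norm (phi_weighted (\<lambda>_. 1) n x) \<le> 3 / x) at_top"
    using eventually_gt_at_top[of "0::real"] by eventually_elim (simp add: abs_phi_weighted_le)
  moreover have "((\<lambda>x. 3 / x :: real) \<longlongrightarrow> 0) at_top"
    by real_asymp
  ultimately show ?thesis
    by (rule Lim_null_comparison)
qed

lemma phi_measurable [measurable]: "phi n \<in> borel_measurable borel"
proof -
  have "continuous_on UNIV (phi_weighted (\<lambda>_. 1) n)"
    using has_real_derivative_phi_weighted_1 DERIV_isCont
    by (blast intro: continuous_at_imp_continuous_on)
  then show ?thesis
    by (simp add: phi_eq_phi_weighted[abs_def] borel_measurable_continuous_onI)
qed

section \<open>A minimum principle\<close>

lemma exists_min_on_pos_reals:
  fixes w :: "real \<Rightarrow> real"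
  assumes cont: "continuous_on {0<..} w"
    and lim0: "(w \<longlongrightarrow> 0) (at_right 0)" and lim_top: "(w \<longlongrightarrow> 0) at_top"
    and "x > 0" "w x < 0"
  shows "\<exists>y>0. \<forall>t>0. w y \<le> w t"
proof -
  obtain a where a: "0 < a" "a < x" "\<And>t. 0 < t \<Longrightarrow> t < a \<Longrightarrow> w x < w t"
  proof -
    have "eventually (\<lambda>t. w x < w t) (at_right 0)"
      using order_tendstoD(1)[OF lim0] \<open>w x < 0\<close> by blast
    then obtain d where "d > 0" "\<And>t. 0 < t \<Longrightarrow> t < d \<Longrightarrow> w x < w t"
      unfolding eventually_at_right_field by auto
    then show ?thesis
      using that[of "min d (x / 2)"] \<open>x > 0\<close> by auto
  qed
  obtain b where b: "x < b" "\<And>t. b < t \<Longrightarrow> w x < w t"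
  proof -
    have "eventually (\<lambda>t. w x < w t) at_top"
      using order_tendstoD(1)[OF lim_top] \<open>w x < 0\<close> by blast
    then obtain N where "\<And>t. N \<le> t \<Longrightarrow> w x < w t"
      unfolding eventually_at_top_linorder by auto
    then show ?thesis
      using that[of "max N x + 1"] by auto
  qed
  have "continuous_on {a..b} w"
    using cont by (rule continuous_on_subset) (use a in auto)
  then obtain y where y: "y \<in> {a..b}" "\<And>t. t \<in> {a..b} \<Longrightarrow> w y \<le> w t"
    using continuous_attains_inf[OF compact_Icc] a b
    by (metis atLeastAtMost_iff empty_iff less_imp_le order.strict_trans)
  have "w y \<le> w x"
    using y a b by auto
  have "w y \<le> w t" if "t > 0" for t
  proof (cases "t < a \<or> b < t")
    case True
    then have "w x < w t"
      using a(3)[OF that] b(2) by auto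
    with \<open>w y \<le> w x\<close> show ?thesis
      by simp
  qed (use y(2) in auto)
  moreover have "y > 0"
    using y a by auto
  ultimately show ?thesis
    by blast
qed

lemma modified_bessel_min_principle:
  fixes w w' w'' :: "real \<Rightarrow> real" and a x :: real
  assumes d1: "\<And>x. x > 0 \<Longrightarrow> (w has_real_derivative w' x) (at x)"
    and d2: "\<And>x. x > 0 \<Longrightarrow> (w' has_real_derivative w'' x) (at x)"
    and ode: "\<And>x. x > 0 \<Longrightarrow> x\<^sup>2 * w'' x + x * w' x \<le> 4 * (x\<^sup>2 + a) * w x"
    and "(w \<longlongrightarrow> 0) (at_right 0)" "(w \<longlongrightarrow> 0) at_top" "a \<ge> 0" "x > 0"
  shows "w x \<ge> 0"
proof (rule ccontr)
  assume "\<not> w x \<ge> 0"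
  have cont: "continuous_on {0<..} w"
    using d1 DERIV_isCont by (auto intro!: continuous_at_imp_continuous_on)
  obtain y where "y > 0" and min: "\<And>t. t > 0 \<Longrightarrow> w y \<le> w t"
    using exists_min_on_pos_reals[OF cont assms(4,5,7)] \<open>\<not> w x \<ge> 0\<close> by auto
  have "w' y = 0"
    by (rule DERIV_local_min[OF d1[OF \<open>y > 0\<close>] \<open>y > 0\<close>]) (auto intro: min)
  have "4 * (y\<^sup>2 + a) * w y < 0"
    using min[OF \<open>x > 0\<close>] \<open>\<not> w x \<ge> 0\<close> \<open>y > 0\<close> \<open>a \<ge> 0\<close>
    by (intro mult_pos_neg) (auto intro: add_pos_nonneg)
  with ode[OF \<open>y > 0\<close>] \<open>w' y = 0\<close> have "y\<^sup>2 * w'' y < 0"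
    by simp
  with \<open>y > 0\<close> have "w'' y < 0"
    by (simp add: mult_less_0_iff)
  then obtain d where "d > 0" and dec: "\<And>h. 0 < h \<Longrightarrow> h < d \<Longrightarrow> w' (y + h) < 0"
    using DERIV_neg_dec_right[OF d2[OF \<open>y > 0\<close>]] \<open>w' y = 0\<close> by force
  have "w (y + d / 2) < w y"
  proof (rule DERIV_neg_imp_decreasing_open[of y "y + d / 2" w])
    fix z
    assume "y < z" "z < y + d / 2"
    then show "\<exists>D. (w has_real_derivative D) (at z) \<and> D < 0"
      using d1[of z] dec[of "z - y"] \<open>y > 0\<close> by auto
  next
    show "continuous_on {y..y + d / 2} w"
      using cont by (rule continuous_on_subset) (use \<open>y > 0\<close> in auto)
  qed (use \<open>d > 0\<close> in simp)
  with min[of "y + d / 2"] \<open>y > 0\<close> \<open>d > 0\<close> show False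
    by simp
qed

lemma modified_bessel_comparison:
  fixes r r' r'' \<phi> \<phi>' \<phi>'' :: "real \<Rightarrow> real" and a x :: real
  assumes "\<And>x. x > 0 \<Longrightarrow> (r has_real_derivative r' x) (at x)"
    and "\<And>x. x > 0 \<Longrightarrow> (r' has_real_derivative r'' x) (at x)"
    and "\<And>x. x > 0 \<Longrightarrow> (\<phi> has_real_derivative \<phi>' x) (at x)"
    and "\<And>x. x > 0 \<Longrightarrow> (\<phi>' has_real_derivative \<phi>'' x) (at x)"
    and "\<And>x. x > 0 \<Longrightarrow> \<bar>x\<^sup>2 * r'' x + x * r' x - 4 * (x\<^sup>2 + a) * r x\<bar>
                          \<le> 4 * (x\<^sup>2 + a) * \<phi> x - (x\<^sup>2 * \<phi>'' x + x * \<phi>' x)"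
    and "(r \<longlongrightarrow> 0) (at_right 0)" "(r \<longlongrightarrow> 0) at_top"
    and "(\<phi> \<longlongrightarrow> 0) (at_right 0)" "(\<phi> \<longlongrightarrow> 0) at_top"
    and "a \<ge> 0" "x > 0"
  shows "\<bar>r x\<bar> \<le> \<phi> x"
proof -
  have "\<phi> x - \<sigma> * r x \<ge> 0" if \<sigma>: "\<sigma> = 1 \<or> \<sigma> = -1" for \<sigma> :: real
  proof (rule modified_bessel_min_principle[where w = "\<lambda>x. \<phi> x - \<sigma> * r x" and x = x
        and w' = "\<lambda>x. \<phi>' x - \<sigma> * r' x" and w'' = "\<lambda>x. \<phi>'' x - \<sigma> * r'' x"])
    show "((\<lambda>x. \<phi> x - \<sigma> * r x) has_real_derivative \<phi>' t - \<sigma> * r' t) (at t)" if "t > 0" for t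
      using that assms(1,3) by (intro DERIV_diff DERIV_cmult) auto
    show "((\<lambda>x. \<phi>' x - \<sigma> * r' x) has_real_derivative \<phi>'' t - \<sigma> * r'' t) (at t)" if "t > 0" for t
      using that assms(2,4) by (intro DERIV_diff DERIV_cmult) auto
    show "t\<^sup>2 * (\<phi>'' t - \<sigma> * r'' t) + t * (\<phi>' t - \<sigma> * r' t) \<le> 4 * (t\<^sup>2 + a) * (\<phi> t - \<sigma> * r t)"
      if "t > 0" for t
      using assms(5)[OF that] \<sigma> by (auto simp: abs_le_iff algebra_simps)
  qed (use assms in \<open>auto intro!: tendsto_eq_intros\<close>)
  from this[of 1] this[of "-1"] show ?thesis
    by auto
qed

section \<open>The rescaled expansion and its remainder\<close>

definition Psi_scaled :: "real \<Rightarrow> nat \<Rightarrow> real \<Rightarrow> real" where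
  "Psi_scaled m k x = Psi k (x / m) / m ^ (2*k + 1)"

lemma has_real_derivative_rescaled:
  assumes "m \<noteq> 0" "(f has_real_derivative D) (at (x / m))"
  shows "((\<lambda>x. f (x / m) / c) has_real_derivative D / (c * m)) (at x)"
proof -
  have "((\<lambda>x. f (x / m)) has_real_derivative D * (1 / m)) (at x)"
    by (rule DERIV_chain2[where g = "\<lambda>x. x / m", OF assms(2)]) (use assms(1) in \<open>auto intro!: derivative_eq_intros\<close>)
  from DERIV_cdivide[OF this, of c] show ?thesis
    by (simp add: mult.commute)
qed

lemma has_real_derivative_Psi_scaled:
  assumes "m \<noteq> 0"
  shows "(Psi_scaled m k has_real_derivative deriv (Psi k) (x / m) / m ^ (2*k + 2)) (at x)"
  using has_real_derivative_rescaled[OF assms has_real_derivative_Psi, where c = "m ^ (2*k + 1)"]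
  by (simp add: Psi_scaled_def[abs_def] mult.commute)

lemma has_real_derivative_deriv_Psi_scaled:
  assumes "m \<noteq> 0"
  shows "((\<lambda>x. deriv (Psi k) (x / m) / m ^ (2*k + 2)) has_real_derivative
     deriv (deriv (Psi k)) (x / m) / m ^ (2*k + 3)) (at x)"
proof -
  have "m ^ (2*k + 3) = m ^ (2*k + 2) * m"
    by (simp add: power_add power2_eq_square power3_eq_cube mult_ac)
  then show ?thesis
    using has_real_derivative_rescaled[OF assms has_real_derivative_deriv_Psi, where c = "m ^ (2*k + 2)"]
    by simp
qed

lemma Psi_scaled_times:
  assumes "m \<noteq> 0"
  shows "(x\<^sup>2 + m\<^sup>2) * Psi_scaled m k x = m * ((1 + (x / m)\<^sup>2) * Psi k (x / m)) / m ^ (2*k)"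
proof -
  have "x\<^sup>2 + m\<^sup>2 = m * m * (1 + (x / m)\<^sup>2)"
    using assms by (simp add: field_simps power2_eq_square)
  then show ?thesis
    using assms by (simp add: Psi_scaled_def)
qed

lemma Psi_scaled_0:
  assumes "m \<noteq> 0"
  shows "Psi_scaled m 0 x = x / (x\<^sup>2 + m\<^sup>2)"
proof -
  have "x\<^sup>2 + m\<^sup>2 > 0"
    using assms by (simp add: add_nonneg_pos)
  moreover have "1 + (x / m)\<^sup>2 > 0"
    by (simp add: add_pos_nonneg)
  then have "(1 + (x / m)\<^sup>2) * Psi 0 (x / m) = x / m"
    by simp
  ultimately show ?thesis
    using Psi_scaled_times[OF assms, of x 0] assms by (simp add: field_simps)
qed

lemma Psi_scaled_Suc:
  assumes "x \<noteq> 0" "m \<noteq> 0"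
  shows "4 * (x\<^sup>2 + m\<^sup>2) * Psi_scaled m (Suc k) x
    = x\<^sup>2 * (deriv (deriv (Psi k)) (x / m) / m ^ (2*k + 3)) + x * (deriv (Psi k) (x / m) / m ^ (2*k + 2))"
proof -
  define y where "y = x / m"
  have x: "x = m * y"
    using assms by (simp add: y_def)
  have "y \<noteq> 0"
    using assms by (simp add: y_def)
  have "4 * (x\<^sup>2 + m\<^sup>2) * Psi_scaled m (Suc k) x = 4 * (1 + y\<^sup>2) * Psi (Suc k) y / m ^ (2*k + 1)"
    using assms by (simp add: Psi_scaled_def y_def[symmetric] x field_simps power2_eq_square)
  also have "\<dots> = (y\<^sup>2 * deriv (deriv (Psi k)) y + y * deriv (Psi k) y) / m ^ (2*k + 1)"
    by (simp only: Psi_Suc_eq[OF \<open>y \<noteq> 0\<close>])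
  also have "\<dots> = x\<^sup>2 * (deriv (deriv (Psi k)) y / m ^ (2*k + 3)) + x * (deriv (Psi k) y / m ^ (2*k + 2))"
    using assms by (simp add: x field_simps power2_eq_square power_add power3_eq_cube)
  finally show ?thesis
    by (simp add: y_def)
qed

lemma Psi_scaled_tendsto_0:
  assumes "m > 0"
  shows "(Psi_scaled m k \<longlongrightarrow> 0) (at_right 0)" and "(Psi_scaled m k \<longlongrightarrow> 0) at_top"
proof -
  have "isCont (Psi_scaled m k) 0"
    unfolding Psi_scaled_def[abs_def] using assms by (auto intro!: continuous_intros isCont_o2[OF _ isCont_Psi])
  then show "(Psi_scaled m k \<longlongrightarrow> 0) (at_right 0)"
    by (simp add: isCont_def Psi_scaled_def Psi_at_0 tendsto_mono[OF at_le[OF subset_UNIV]])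
  have "filterlim (\<lambda>x. x / m) at_top at_top"
    using assms by real_asymp
  then show "(Psi_scaled m k \<longlongrightarrow> 0) at_top"
    unfolding Psi_scaled_def[abs_def]
    by (intro tendsto_divide_zero filterlim_compose[OF Psi_tendsto_0_at_top])
qed

lemma abs_Psi_scaled_le:
  assumes "m > 0" "x > 0" "\<forall>y>0. \<bar>Psi k y\<bar> \<le> A * y / (1 + y\<^sup>2)"
  shows "(x\<^sup>2 + m\<^sup>2) * \<bar>Psi_scaled m k x\<bar> \<le> A * x / m ^ (2*k)"
proof -
  define y where "y = x / m"
  have "y > 0" "1 + y\<^sup>2 > 0"
    using assms by (simp_all add: y_def add_pos_nonneg)
  then have "(1 + y\<^sup>2) * \<bar>Psi k y\<bar> \<le> A * y"
    using assms(3) pos_le_divide_eq[of "1 + y\<^sup>2"] by (auto simp: mult.commute)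
  have "(x\<^sup>2 + m\<^sup>2) * \<bar>Psi_scaled m k x\<bar> = \<bar>(x\<^sup>2 + m\<^sup>2) * Psi_scaled m k x\<bar>"
    by (simp add: abs_mult)
  also have "\<dots> = m * ((1 + y\<^sup>2) * \<bar>Psi k y\<bar>) / m ^ (2*k)"
    using Psi_scaled_times[of m x k] assms \<open>1 + y\<^sup>2 > 0\<close> by (simp add: y_def abs_mult abs_div)
  also have "\<dots> \<le> m * (A * y) / m ^ (2*k)"
    using \<open>(1 + y\<^sup>2) * \<bar>Psi k y\<bar> \<le> A * y\<close> assms by (intro divide_right_mono mult_left_mono) auto
  also have "\<dots> = A * x / m ^ (2*k)"
    using assms by (simp add: y_def)
  finally show ?thesis .
qed

lemma Psi_scaled_1_le:
  assumes "m \<ge> 1" "x > 0"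
  shows "4 * (x\<^sup>2 + m\<^sup>2) * Psi_scaled m 1 x \<le> x"
proof -
  have "4 * (x\<^sup>2 + m\<^sup>2) * Psi_scaled m 1 x = 4 * m * ((1 + (x / m)\<^sup>2) * Psi 1 (x / m)) / m\<^sup>2"
    using assms by (subst mult.assoc) (simp add: Psi_scaled_times)
  also have "\<dots> \<le> 4 * m * (x / m / 4) / m\<^sup>2"
    using Psi_1_le[of "x / m"] assms by (intro divide_right_mono mult_left_mono) auto
  also have "\<dots> = x / m\<^sup>2"
    using assms by (simp add: power2_eq_square)
  also have "\<dots> \<le> x"
    using assms by (simp add: divide_le_eq one_le_power)
  finally show ?thesis .
qed

lemma Psi_scaled_sum_ode:
  assumes "x > 0" "m \<noteq> 0"
  shows "x\<^sup>2 * (\<Sum>k\<le>N. deriv (deriv (Psi k)) (x / m) / m ^ (2*k + 3))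
      + x * (\<Sum>k\<le>N. deriv (Psi k) (x / m) / m ^ (2*k + 2))
      - 4 * (x\<^sup>2 + m\<^sup>2) * (\<Sum>k\<le>N. Psi_scaled m k x)
    = 4 * (x\<^sup>2 + m\<^sup>2) * Psi_scaled m (Suc N) x - 4 * x"
proof -
  have "x\<^sup>2 * (\<Sum>k\<le>N. deriv (deriv (Psi k)) (x / m) / m ^ (2*k + 3))
      + x * (\<Sum>k\<le>N. deriv (Psi k) (x / m) / m ^ (2*k + 2))
      = (\<Sum>k\<le>N. x\<^sup>2 * (deriv (deriv (Psi k)) (x / m) / m ^ (2*k + 3))
          + x * (deriv (Psi k) (x / m) / m ^ (2*k + 2)))"
    by (simp add: sum_distrib_left sum.distrib)
  also have "\<dots> = (\<Sum>k\<le>N. 4 * (x\<^sup>2 + m\<^sup>2) * Psi_scaled m (Suc k) x)"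
    using Psi_scaled_Suc[of x m, symmetric] assms by (intro sum.cong refl) simp
  also have "\<dots> = 4 * (x\<^sup>2 + m\<^sup>2) * (\<Sum>k\<le>N. Psi_scaled m (Suc k) x)"
    by (simp add: sum_distrib_left)
  finally have derivs: "x\<^sup>2 * (\<Sum>k\<le>N. deriv (deriv (Psi k)) (x / m) / m ^ (2*k + 3))
      + x * (\<Sum>k\<le>N. deriv (Psi k) (x / m) / m ^ (2*k + 2))
      = 4 * (x\<^sup>2 + m\<^sup>2) * (\<Sum>k\<le>N. Psi_scaled m (Suc k) x)" .
  have "x\<^sup>2 + m\<^sup>2 > 0"
    using assms by (simp add: add_nonneg_pos)
  then have first: "4 * (x\<^sup>2 + m\<^sup>2) * Psi_scaled m 0 x = 4 * x"
    using assms by (simp add: Psi_scaled_0 field_simps)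
  have "(\<Sum>k\<le>N. Psi_scaled m (Suc k) x) - (\<Sum>k\<le>N. Psi_scaled m k x)
      = Psi_scaled m (Suc N) x - Psi_scaled m 0 x"
    using sum_telescope[of "\<lambda>k. Psi_scaled m k x" N] by (simp add: sum_subtractf)
  then have "4 * (x\<^sup>2 + m\<^sup>2) * (\<Sum>k\<le>N. Psi_scaled m (Suc k) x) - 4 * (x\<^sup>2 + m\<^sup>2) * (\<Sum>k\<le>N. Psi_scaled m k x)
      = 4 * (x\<^sup>2 + m\<^sup>2) * Psi_scaled m (Suc N) x - 4 * (x\<^sup>2 + m\<^sup>2) * Psi_scaled m 0 x"
    by (simp flip: right_diff_distrib)
  then show ?thesis
    unfolding derivs first .
qed

lemma Psi_scaled_0_supersolution:
  assumes "m \<ge> 1" "x > 0"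
  shows "3 * x \<le> 4 * (x\<^sup>2 + m\<^sup>2) * Psi_scaled m 0 x
    - (x\<^sup>2 * (deriv (deriv (Psi 0)) (x / m) / m ^ 3) + x * (deriv (Psi 0) (x / m) / m\<^sup>2))"
  using Psi_scaled_sum_ode[OF assms(2), of m 0] Psi_scaled_1_le[OF assms] assms
  by (simp add: power2_eq_square)

lemma phi_weighted_remainder_le:
  fixes n N :: nat and A x :: real
  assumes n: "n \<ge> 1" and "x > 0" and A: "\<forall>y>0. \<bar>Psi (Suc N) y\<bar> \<le> A * y / (1 + y\<^sup>2)"
  shows "\<bar>phi_weighted (\<lambda>_. 1) n x - (\<Sum>k\<le>N. Psi_scaled n k x)\<bar>
    \<le> 2 * A / real n ^ (2*N + 2) * Psi_scaled n 0 x"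
proof -
  define m where "m = real n"
  have "m \<ge> 1"
    using n by (simp add: m_def)
  have "A \<ge> 0"
    using A[rule_format, of 1] by simp
  define K where "K = 2 * A / m ^ (2*N + 2)"
  define T1 where "T1 k t = deriv (Psi k) (t / m) / m ^ (2*k + 2)" for k t
  define T2 where "T2 k t = deriv (deriv (Psi k)) (t / m) / m ^ (2*k + 3)" for k t
  define r where "r t = phi_weighted (\<lambda>_. 1) n t - (\<Sum>k\<le>N. Psi_scaled m k t)" for t
  define r' where "r' t = phi_weighted (\<lambda>t. - 2 * sin t) n t - (\<Sum>k\<le>N. T1 k t)" for t
  define r'' where "r'' t = phi_weighted (\<lambda>t. 4 * (sin t)\<^sup>2) n t - (\<Sum>k\<le>N. T2 k t)" for t
  have "\<bar>r x\<bar> \<le> K * Psi_scaled m 0 x"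
  proof (rule modified_bessel_comparison[where r = r and r' = r' and r'' = r'' and x = x
        and \<phi> = "\<lambda>t. K * Psi_scaled m 0 t" and \<phi>' = "\<lambda>t. K * T1 0 t" and \<phi>'' = "\<lambda>t. K * T2 0 t"
        and a = "m\<^sup>2"])
    fix t :: real
    assume "t > 0"
    show "(r has_real_derivative r' t) (at t)"
      unfolding r_def[abs_def] r'_def T1_def using \<open>m \<ge> 1\<close>
      by (intro DERIV_diff DERIV_sum has_real_derivative_phi_weighted_1 has_real_derivative_Psi_scaled) auto
    show "(r' has_real_derivative r'' t) (at t)"
      unfolding r'_def[abs_def] r''_def T1_def T2_def using \<open>m \<ge> 1\<close>
      by (intro DERIV_diff DERIV_sum has_real_derivative_phi_weighted_2 has_real_derivative_deriv_Psi_scaled) auto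
    show "((\<lambda>t. K * Psi_scaled m 0 t) has_real_derivative K * T1 0 t) (at t)"
      unfolding T1_def using \<open>m \<ge> 1\<close> by (intro DERIV_cmult has_real_derivative_Psi_scaled) auto
    show "((\<lambda>t. K * T1 0 t) has_real_derivative K * T2 0 t) (at t)"
      unfolding T1_def T2_def using \<open>m \<ge> 1\<close>
      by (intro DERIV_cmult has_real_derivative_deriv_Psi_scaled) auto
    have "t\<^sup>2 * r'' t + t * r' t - 4 * (t\<^sup>2 + m\<^sup>2) * r t = - (4 * (t\<^sup>2 + m\<^sup>2) * Psi_scaled m (Suc N) t)"
      using phi_weighted_ode[of t n] Psi_scaled_sum_ode[OF \<open>t > 0\<close>, of m N] \<open>m \<ge> 1\<close>
      unfolding r_def r'_def r''_def T1_def T2_def m_def by (simp add: algebra_simps)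
    then have "\<bar>t\<^sup>2 * r'' t + t * r' t - 4 * (t\<^sup>2 + m\<^sup>2) * r t\<bar>
        = 4 * ((t\<^sup>2 + m\<^sup>2) * \<bar>Psi_scaled m (Suc N) t\<bar>)"
      by (simp add: abs_mult)
    also have "\<dots> \<le> 4 * (A * t / m ^ (2*N + 2))"
      using abs_Psi_scaled_le[OF _ \<open>t > 0\<close> A, of m] \<open>m \<ge> 1\<close> by simp
    also have "\<dots> \<le> K * (3 * t)"
      using \<open>A \<ge> 0\<close> \<open>t > 0\<close> \<open>m \<ge> 1\<close> by (simp add: K_def field_simps)
    also have "\<dots> \<le> K * (4 * (t\<^sup>2 + m\<^sup>2) * Psi_scaled m 0 t - (t\<^sup>2 * T2 0 t + t * T1 0 t))"
      using Psi_scaled_0_supersolution[OF \<open>m \<ge> 1\<close> \<open>t > 0\<close>] \<open>m \<ge> 1\<close> \<open>A \<ge> 0\<close>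
      unfolding T1_def T2_def K_def by (intro mult_left_mono) (simp_all add: power2_eq_square power3_eq_cube)
    finally show "\<bar>t\<^sup>2 * r'' t + t * r' t - 4 * (t\<^sup>2 + m\<^sup>2) * r t\<bar>
        \<le> 4 * (t\<^sup>2 + m\<^sup>2) * (K * Psi_scaled m 0 t) - (t\<^sup>2 * (K * T2 0 t) + t * (K * T1 0 t))"
      by (simp add: algebra_simps)
  next
    have "isCont (phi_weighted (\<lambda>_. 1) n) 0"
      using has_real_derivative_phi_weighted_1 DERIV_isCont by blast
    then have "(phi_weighted (\<lambda>_. 1) n \<longlongrightarrow> 0) (at_right 0)"
      using phi_weighted_at_0[OF n] by (simp add: isCont_def tendsto_mono[OF at_le[OF subset_UNIV]])
    then show "(r \<longlongrightarrow> 0) (at_right 0)"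
      unfolding r_def[abs_def] using \<open>m \<ge> 1\<close>
      by (auto intro!: tendsto_eq_intros Psi_scaled_tendsto_0)
    show "(r \<longlongrightarrow> 0) at_top"
      unfolding r_def[abs_def] using \<open>m \<ge> 1\<close>
      by (auto intro!: tendsto_eq_intros Psi_scaled_tendsto_0 phi_weighted_tendsto_0_at_top)
    show "((\<lambda>t. K * Psi_scaled m 0 t) \<longlongrightarrow> 0) (at_right 0)"
      "((\<lambda>t. K * Psi_scaled m 0 t) \<longlongrightarrow> 0) at_top"
      using \<open>m \<ge> 1\<close> by (auto intro!: tendsto_eq_intros Psi_scaled_tendsto_0)
  qed (use \<open>x > 0\<close> in simp_all)
  then show ?thesis
    by (simp add: r_def K_def m_def)
qed

section \<open>The pointwise estimate\<close>

lemma div_one_plus_square_le_powr: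
  fixes y \<delta> :: real
  assumes "y > 0" "0 \<le> \<delta>" "\<delta> \<le> 1"
  shows "y / (1 + y\<^sup>2) \<le> 2 * y powr \<delta> / (1 + y)"
proof -
  have "y * (1 + y) \<le> y powr \<delta> * (2 * (1 + y\<^sup>2))"
  proof (cases "y \<le> 1")
    case True
    then have "y \<le> y powr \<delta>"
      using assms powr_mono'[of \<delta> 1 y] by simp
    moreover have "1 + y \<le> 2 * (1 + y\<^sup>2)"
      using True order_trans[of "1 + y" 2 "2 * (1 + y\<^sup>2)"] by simp
    ultimately show ?thesis
      using assms by (intro mult_mono) auto
  next
    case False
    then have "y * 1 \<le> y * y"
      by (intro mult_left_mono) auto
    then have "y * (1 + y) \<le> 1 * (2 * (1 + y\<^sup>2))"
      by (simp add: power2_eq_square algebra_simps)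
    also have "\<dots> \<le> y powr \<delta> * (2 * (1 + y\<^sup>2))"
      using False assms by (intro mult_right_mono ge_one_powr_ge_zero) auto
    finally show ?thesis .
  qed
  moreover have "1 + y\<^sup>2 > 0"
    by (simp add: add_pos_nonneg)
  ultimately show ?thesis
    using assms by (simp add: field_simps)
qed

lemma powr_scaled_div_le:
  fixes c x \<delta> :: real
  assumes "0 < c" "c \<le> 1" "x > 0" "\<delta> \<ge> 0"
  shows "(c * x) powr \<delta> / x \<le> x powr (\<delta> - 1)"
proof -
  have "(c * x) powr \<delta> / x = c powr \<delta> * x powr (\<delta> - 1)"
    using assms by (simp add: powr_mult powr_diff)
  also have "\<dots> \<le> x powr (\<delta> - 1)"
    using assms powr_le1[of \<delta> c] by (simp add: mult_left_le_one_le)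
  finally show ?thesis .
qed

lemma abs_Psi_div_le_powr:
  fixes \<delta> :: real
  assumes "0 \<le> \<delta>" "\<delta> \<le> 1"
  shows "\<exists>B. \<forall>a x. 0 < a \<longrightarrow> a \<le> 1 \<longrightarrow> x > 0 \<longrightarrow>
    \<bar>Psi k (a * x) / x\<bar> \<le> B * (x powr (\<delta> - 1) / (1 + a * x))"
proof -
  obtain A where A: "A \<ge> 0" "\<forall>y>0. \<bar>Psi k y\<bar> \<le> A * y / (1 + y\<^sup>2)"
    using abs_Psi_le by blast
  have "\<bar>Psi k (a * x) / x\<bar> \<le> 2 * A * (x powr (\<delta> - 1) / (1 + a * x))"
    if "0 < a" "a \<le> 1" "x > 0" for a x
  proof -
    have "a * x > 0"
      using that by simp
    have "\<bar>Psi k (a * x)\<bar> \<le> A * (a * x / (1 + (a * x)\<^sup>2))"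
      using A \<open>a * x > 0\<close> by simp
    also have "\<dots> \<le> A * (2 * (a * x) powr \<delta> / (1 + a * x))"
      using div_one_plus_square_le_powr[OF \<open>a * x > 0\<close> assms] A by (intro mult_left_mono) auto
    finally have "\<bar>Psi k (a * x)\<bar> / x \<le> A * (2 * (a * x) powr \<delta> / (1 + a * x)) / x"
      using \<open>x > 0\<close> by (intro divide_right_mono) auto
    then have "\<bar>Psi k (a * x) / x\<bar> \<le> 2 * A * (((a * x) powr \<delta> / x) / (1 + a * x))"
      using \<open>x > 0\<close> by (simp add: abs_div mult_ac)
    also have "\<dots> \<le> 2 * A * (x powr (\<delta> - 1) / (1 + a * x))"
      using powr_scaled_div_le[OF that] A assms \<open>a * x > 0\<close>
      by (intro mult_left_mono divide_right_mono) simp_all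
    finally show ?thesis .
  qed
  then show ?thesis
    by blast
qed

lemma phi_expansion_bound:
  fixes N :: nat and \<delta> :: real
  assumes "0 \<le> \<delta>" "\<delta> \<le> 1"
  shows "\<exists>C>0. \<forall>n::nat. n \<ge> 1 \<longrightarrow> (\<forall>x::real. x > 0 \<longrightarrow>
    norm (phi n x - (\<Sum>k\<le>N. complex_of_real (Psi k (x / real n) / real n ^ (2*k + 1))))
      \<le> C / real n powr (2 * real N + 5/3) * (x powr \<delta> / (1 + x / real n)))"
proof -
  obtain A where A: "A \<ge> 0" "\<forall>y>0. \<bar>Psi (Suc N) y\<bar> \<le> A * y / (1 + y\<^sup>2)"
    using abs_Psi_le by blast
  have bound: "norm (phi n x - (\<Sum>k\<le>N. complex_of_real (Psi k (x / real n) / real n ^ (2*k + 1))))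
      \<le> 4 * A / real n powr (2 * real N + 5/3) * (x powr \<delta> / (1 + x / real n))"
    if "n \<ge> 1" "x > 0" for n x
  proof -
    define m where "m = real n"
    have "m \<ge> 1" "x / m > 0"
      using that by (simp_all add: m_def)
    have "norm (phi n x - (\<Sum>k\<le>N. complex_of_real (Psi k (x / real n) / real n ^ (2*k + 1))))
        = \<bar>phi_weighted (\<lambda>_. 1) n x - (\<Sum>k\<le>N. Psi_scaled m k x)\<bar>"
      unfolding phi_eq_phi_weighted Psi_scaled_def m_def of_real_sum[symmetric] of_real_diff[symmetric]
        norm_of_real ..
    also have "\<dots> \<le> 2 * A / m ^ (2*N + 2) * ((x / m) / (1 + (x / m)\<^sup>2) / m)"
      using phi_weighted_remainder_le[OF that A(2)] by (simp add: m_def Psi_scaled_def)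
    also have "\<dots> \<le> 2 * A / m ^ (2*N + 2) * (2 * (x / m) powr \<delta> / (1 + x / m) / m)"
      using div_one_plus_square_le_powr[OF \<open>x / m > 0\<close> assms] A \<open>m \<ge> 1\<close>
      by (intro mult_left_mono divide_right_mono) auto
    also have "\<dots> = 4 * A / (m ^ (2*N + 2) * m * m powr \<delta>) * (x powr \<delta> / (1 + x / m))"
    proof -
      have "2 * A / M * (2 * (X / P) / q / m) = 4 * A / (M * m * P) * (X / q)"
        if "M > 0" "P > 0" "q > 0" for M P q X
        using that \<open>m \<ge> 1\<close> by (simp add: field_simps)
      then show ?thesis
        using \<open>m \<ge> 1\<close> that by (simp add: powr_divide add_pos_pos)
    qed
    also have "\<dots> \<le> 4 * A / m powr (2 * real N + 5/3) * (x powr \<delta> / (1 + x / m))"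
    proof -
      have "m powr (2 * real N + 5/3) \<le> m powr (real (2*N + 3) + \<delta>)"
        using \<open>m \<ge> 1\<close> assms by (intro powr_mono) auto
      also have "\<dots> = m powr real (2*N + 3) * m powr \<delta>"
        by (rule powr_add)
      also have "\<dots> = m ^ (2*N + 2) * m * m powr \<delta>"
        using \<open>m \<ge> 1\<close> by (subst powr_realpow) (simp_all add: power_add power3_eq_cube mult_ac)
      finally show ?thesis
        using \<open>m \<ge> 1\<close> A that
        by (intro mult_right_mono divide_left_mono) (simp_all add: add_pos_pos)
    qed
    finally show ?thesis
      by (simp add: m_def)
  qed
  show ?thesis
  proof (intro exI[of _ "4 * A + 1"] conjI allI impI)
    fix n :: nat and x :: real
    assume "n \<ge> 1" "x > 0"
    have "norm (phi n x - (\<Sum>k\<le>N. complex_of_real (Psi k (x / real n) / real n ^ (2*k + 1))))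
        \<le> 4 * A / real n powr (2 * real N + 5/3) * (x powr \<delta> / (1 + x / real n))"
      using \<open>n \<ge> 1\<close> \<open>x > 0\<close> by (rule bound)
    also have "\<dots> \<le> (4 * A + 1) / real n powr (2 * real N + 5/3) * (x powr \<delta> / (1 + x / real n))"
      using \<open>n \<ge> 1\<close> \<open>x > 0\<close> by (intro mult_right_mono divide_right_mono) (simp_all add: add_pos_pos)
    finally show "norm (phi n x - (\<Sum>k\<le>N. complex_of_real (Psi k (x / real n) / real n ^ (2*k + 1))))
        \<le> (4 * A + 1) / real n powr (2 * real N + 5/3) * (x powr \<delta> / (1 + x / real n))" .
  qed (use A in auto)
qed

section \<open>Integration against the measure\<close>

lemma weight_integral_finite:
  fixes M :: "real measure" and h :: "real \<Rightarrow> real"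
  assumes sets: "sets M = sets borel" and "AE x in M. 0 \<le> x"
    and h: "h \<in> borel_measurable borel" "\<And>x. x > 0 \<Longrightarrow> h x \<ge> 0"
    and fin: "(\<integral>\<^sup>+x. (if x = 0 then \<infinity> else ennreal (h x)) \<partial>M) < \<infinity>"
  shows "AE x in M. 0 < x" and "integrable M h"
    and "(\<integral>\<^sup>+x. (if x = 0 then \<infinity> else ennreal (h x)) \<partial>M) = ennreal (\<integral>x. h x \<partial>M)"
proof -
  have meas: "measurable M N = measurable borel N" for N :: "'b measure"
    by (rule measurable_cong_sets[OF sets refl])
  note [measurable] = h(1)
  have "(\<lambda>x. if x = 0 then \<infinity> else ennreal (h x)) \<in> borel_measurable M"
    unfolding meas by measurable
  then have "AE x in M. (if x = 0 then \<infinity> else ennreal (h x)) \<noteq> \<infinity>"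
    by (rule nn_integral_PInf_AE) (use fin in simp)
  then show pos: "AE x in M. 0 < x"
    using \<open>AE x in M. 0 \<le> x\<close> by eventually_elim (auto split: if_splits)
  have "AE x in M. (if x = 0 then \<infinity> else ennreal (h x)) = ennreal (h x)"
    using pos by eventually_elim simp
  then have eq: "(\<integral>\<^sup>+x. (if x = 0 then \<infinity> else ennreal (h x)) \<partial>M) = (\<integral>\<^sup>+x. ennreal (h x) \<partial>M)"
    by (rule nn_integral_cong_AE)
  have "AE x in M. 0 \<le> h x"
    using pos by eventually_elim (simp add: h(2))
  moreover have "h \<in> borel_measurable M"
    unfolding meas by measurable
  ultimately show int: "integrable M h"
    using fin unfolding eq by (intro integrableI_nonneg) simp_all
  show "(\<integral>\<^sup>+x. (if x = 0 then \<infinity> else ennreal (h x)) \<partial>M) = ennreal (\<integral>x. h x \<partial>M)"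
    unfolding eq using int \<open>AE x in M. 0 \<le> h x\<close> by (rule nn_integral_eq_integral)
qed

lemma integral_expansion_remainder_le:
  fixes M :: "real measure" and f :: "real \<Rightarrow> complex" and g :: "nat \<Rightarrow> real \<Rightarrow> real"
    and h :: "real \<Rightarrow> real" and d :: "nat \<Rightarrow> real"
  assumes sets: "sets M = sets borel" and pos: "AE x in M. 0 < x" and h: "integrable M h"
    and meas: "f \<in> borel_measurable borel" "\<And>k. g k \<in> borel_measurable borel"
    and g_le: "\<And>k. k \<le> N \<Longrightarrow> \<exists>B. \<forall>x>0. \<bar>g k x\<bar> \<le> B * h x"
    and rem: "\<And>x. x > 0 \<Longrightarrow> norm (f x - (\<Sum>k\<le>N. complex_of_real (g k x / d k))) \<le> c * h x"
  shows "integrable M f" and "\<And>k. k \<le> N \<Longrightarrow> integrable M (g k)"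
    and "norm ((\<integral>x. f x \<partial>M) - (\<Sum>k\<le>N. complex_of_real ((\<integral>x. g k x \<partial>M) / d k)))
      \<le> c * (\<integral>x. h x \<partial>M)"
proof -
  have measM: "measurable M N = measurable borel N" for N :: "'b measure"
    by (rule measurable_cong_sets[OF sets refl])
  define S where "S x = (\<Sum>k\<le>N. complex_of_real (g k x / d k))" for x
  show int_g: "integrable M (g k)" if k: "k \<le> N" for k
  proof -
    obtain B where B: "\<forall>x>0. \<bar>g k x\<bar> \<le> B * h x"
      using g_le[OF k] by blast
    have AE_le: "AE x in M. norm (g k x) \<le> norm (B * h x)"
      using pos
    proof eventually_elim
      case (elim x)
      then have "\<bar>g k x\<bar> \<le> B * h x"
        using B by simp
      then show ?case
        unfolding real_norm_def by (rule order_trans[OF _ abs_ge_self])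
    qed
    have "g k \<in> borel_measurable M"
      using meas(2) by (simp add: measM)
    from Bochner_Integration.integrable_bound[OF integrable_mult_right[OF h] this AE_le] show ?thesis .
  qed
  have int_S: "integrable M S"
    unfolding S_def using int_g by (auto intro!: Bochner_Integration.integrable_sum integrable_of_real)
  have AE_le: "AE x in M. norm (f x - S x) \<le> norm (c * h x)"
    using pos
  proof eventually_elim
    case (elim x)
    then have "norm (f x - S x) \<le> c * h x"
      using rem by (simp add: S_def)
    then show ?case
      unfolding real_norm_def[of "c * h x"] by (rule order_trans[OF _ abs_ge_self])
  qed
  have "(\<lambda>x. f x - S x) \<in> borel_measurable M"
    using meas unfolding S_def measM by measurable
  from Bochner_Integration.integrable_bound[OF integrable_mult_right[OF h] this AE_le]
  have int_rem: "integrable M (\<lambda>x. f x - S x)" .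
  show int_f: "integrable M f"
    using Bochner_Integration.integrable_add[OF int_rem int_S] by simp
  have "(\<integral>x. S x \<partial>M) = (\<Sum>k\<le>N. complex_of_real ((\<integral>x. g k x \<partial>M) / d k))"
    unfolding S_def using int_g by (subst Bochner_Integration.integral_sum) auto
  then have "norm ((\<integral>x. f x \<partial>M) - (\<Sum>k\<le>N. complex_of_real ((\<integral>x. g k x \<partial>M) / d k)))
      = norm (\<integral>x. f x - S x \<partial>M)"
    using int_f int_S by simp
  also have "\<dots> \<le> (\<integral>x. norm (f x - S x) \<partial>M)"
    by (rule integral_norm_bound)
  also have "\<dots> \<le> (\<integral>x. c * h x \<partial>M)"
    using int_rem h pos rem by (intro integral_mono_AE) (auto simp: S_def elim: eventually_mono)
  finally show "norm ((\<integral>x. f x \<partial>M) - (\<Sum>k\<le>N. complex_of_real ((\<integral>x. g k x \<partial>M) / d k)))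
      \<le> c * (\<integral>x. h x \<partial>M)"
    by simp
qed

lemma norm_phi_div_remainder_le:
  fixes b x \<delta> c :: real and n N :: nat
  assumes "0 < b" "b \<le> 1" "x > 0" "0 \<le> \<delta>" "c \<ge> 0"
    and "norm (phi n (b * x) - (\<Sum>k\<le>N. complex_of_real (Psi k (b * x / real n) / real n ^ (2*k + 1))))
      \<le> c * ((b * x) powr \<delta> / (1 + b * x / real n))"
  shows "norm (phi n (b * x) / complex_of_real x
      - (\<Sum>k\<le>N. complex_of_real (Psi k (b * x / real n) / x / real n ^ (2*k + 1))))
    \<le> c * (x powr (\<delta> - 1) / (1 + b * x / real n))"
proof -
  have "phi n (b * x) / complex_of_real x
      - (\<Sum>k\<le>N. complex_of_real (Psi k (b * x / real n) / x / real n ^ (2*k + 1)))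
      = (phi n (b * x) - (\<Sum>k\<le>N. complex_of_real (Psi k (b * x / real n) / real n ^ (2*k + 1))))
        / complex_of_real x"
    by (simp add: diff_divide_distrib sum_divide_distrib divide_divide_eq_left mult.commute)
  then have "norm (phi n (b * x) / complex_of_real x
      - (\<Sum>k\<le>N. complex_of_real (Psi k (b * x / real n) / x / real n ^ (2*k + 1))))
      = norm (phi n (b * x) - (\<Sum>k\<le>N. complex_of_real (Psi k (b * x / real n) / real n ^ (2*k + 1)))) / x"
    using assms(3) by (simp only: norm_divide norm_of_real abs_of_pos)
  also have "\<dots> \<le> c * ((b * x) powr \<delta> / (1 + b * x / real n)) / x"
    using assms(3,6) by (intro divide_right_mono) simp_all
  also have "\<dots> = c * (((b * x) powr \<delta> / x) / (1 + b * x / real n))"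
    by simp
  also have "\<dots> \<le> c * (x powr (\<delta> - 1) / (1 + b * x / real n))"
    using powr_scaled_div_le[OF assms(1-4)] assms
    by (intro mult_left_mono divide_right_mono) (simp_all add: add_pos_nonneg)
  finally show ?thesis .
qed

lemma lambda_nb_expansion_bound:
  fixes M :: "real measure" and n N :: nat and b \<delta> c :: real
  assumes sets: "sets M = sets borel" and "AE x in M. 0 \<le> x"
    and b: "0 < b" "b < 1" and n: "n \<ge> 1" and \<delta>: "0 \<le> \<delta>" "\<delta> \<le> 1" and "c > 0"
    and phi_bound: "\<And>x. x > 0 \<Longrightarrow>
      norm (phi n x - (\<Sum>k\<le>N. complex_of_real (Psi k (x / real n) / real n ^ (2*k + 1))))
        \<le> c * (x powr \<delta> / (1 + x / real n))"
  defines "R \<equiv> \<integral>\<^sup>+x. (if x = 0 then \<infinity> else ennreal (x powr (\<delta> - 1) / (1 + b * x / real n)))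
    \<partial>M"
  shows "ennreal (norm (lambda_nb M n b - 2 * (\<Sum>k\<le>N. complex_of_real
            ((\<integral>x. Psi k (b * x / real n) / x \<partial>M) / real n ^ (2*k + 1)))))
      \<le> ennreal (2 * c) * R"
    and "R < \<infinity> \<Longrightarrow> integrable M (\<lambda>x. phi n (b * x) / complex_of_real x)
      \<and> (\<forall>k\<le>N. integrable M (\<lambda>x. Psi k (b * x / real n) / x))"
proof -
  define h where "h x = x powr (\<delta> - 1) / (1 + b * x / real n)" for x
  have h_nonneg: "h x \<ge> 0" if "x > 0" for x
    using that b by (simp add: h_def)
  have R: "R = \<integral>\<^sup>+x. (if x = 0 then \<infinity> else ennreal (h x)) \<partial>M"
    by (simp only: R_def h_def)
  have finite: "integrable M (\<lambda>x. phi n (b * x) / complex_of_real x)"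
      "\<forall>k\<le>N. integrable M (\<lambda>x. Psi k (b * x / real n) / x)"
      "norm (lambda_nb M n b - 2 * (\<Sum>k\<le>N. complex_of_real
            ((\<integral>x. Psi k (b * x / real n) / x \<partial>M) / real n ^ (2*k + 1))))
        \<le> 2 * c * (\<integral>x. h x \<partial>M)"
      "R = ennreal (\<integral>x. h x \<partial>M)" "0 \<le> (\<integral>x. h x \<partial>M)"
    if "R < \<infinity>"
  proof -
    have h_meas: "h \<in> borel_measurable borel"
      unfolding h_def by measurable
    note weight = weight_integral_finite[OF sets \<open>AE x in M. 0 \<le> x\<close> h_meas h_nonneg that[unfolded R]]
    have g_le: "\<exists>B. \<forall>x>0. \<bar>Psi k (b * x / real n) / x\<bar> \<le> B * h x" if "k \<le> N" for k
    proof -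
      obtain B where B: "\<forall>a x. 0 < a \<longrightarrow> a \<le> 1 \<longrightarrow> x > 0 \<longrightarrow>
          \<bar>Psi k (a * x) / x\<bar> \<le> B * (x powr (\<delta> - 1) / (1 + a * x))"
        using abs_Psi_div_le_powr[OF \<delta>] by blast
      have "0 < b / real n" "b / real n \<le> 1"
        using b n by (simp_all add: field_simps)
      have "\<bar>Psi k (b * x / real n) / x\<bar> \<le> B * h x" if "x > 0" for x
        using B[rule_format, of "b / real n" x] \<open>0 < b / real n\<close> \<open>b / real n \<le> 1\<close> that
        by (simp add: h_def)
      then show ?thesis
        by blast
    qed
    have rem: "norm (phi n (b * x) / complex_of_real x
        - (\<Sum>k\<le>N. complex_of_real (Psi k (b * x / real n) / x / real n ^ (2*k + 1)))) \<le> c * h x"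
      if "x > 0" for x
      using norm_phi_div_remainder_le[OF b(1) _ that \<delta>(1) _ phi_bound] b that \<open>c > 0\<close>
      by (simp add: h_def)
    have f_meas: "(\<lambda>x. phi n (b * x) / complex_of_real x) \<in> borel_measurable borel"
      by measurable
    have g_meas: "(\<lambda>x. Psi k (b * x / real n) / x) \<in> borel_measurable borel" for k
      by measurable
    note expansion = integral_expansion_remainder_le[where f = "\<lambda>x. phi n (b * x) / complex_of_real x"
        and g = "\<lambda>k x. Psi k (b * x / real n) / x" and d = "\<lambda>k. real n ^ (2*k + 1)",
        OF sets weight(1,2) f_meas g_meas g_le rem]
    show "integrable M (\<lambda>x. phi n (b * x) / complex_of_real x)"
      by (rule expansion(1))
    show "\<forall>k\<le>N. integrable M (\<lambda>x. Psi k (b * x / real n) / x)"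
      using expansion(2) by simp
    have "norm (lambda_nb M n b - 2 * (\<Sum>k\<le>N. complex_of_real
            ((\<integral>x. Psi k (b * x / real n) / x \<partial>M) / real n ^ (2*k + 1))))
        = 2 * norm ((\<integral>x. phi n (b * x) / complex_of_real x \<partial>M) - (\<Sum>k\<le>N. complex_of_real
            ((\<integral>x. Psi k (b * x / real n) / x \<partial>M) / real n ^ (2*k + 1))))"
    proof -
      have eq: "lambda_nb M n b - 2 * (\<Sum>k\<le>N. complex_of_real
            ((\<integral>x. Psi k (b * x / real n) / x \<partial>M) / real n ^ (2*k + 1)))
          = 2 * ((\<integral>x. phi n (b * x) / complex_of_real x \<partial>M) - (\<Sum>k\<le>N. complex_of_real
            ((\<integral>x. Psi k (b * x / real n) / x \<partial>M) / real n ^ (2*k + 1))))"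
        by (simp add: lambda_nb_def right_diff_distrib)
      show ?thesis
        unfolding eq norm_mult by simp
    qed
    also have "\<dots> \<le> 2 * c * (\<integral>x. h x \<partial>M)"
      using expansion(3) by simp
    finally show "norm (lambda_nb M n b - 2 * (\<Sum>k\<le>N. complex_of_real
            ((\<integral>x. Psi k (b * x / real n) / x \<partial>M) / real n ^ (2*k + 1))))
        \<le> 2 * c * (\<integral>x. h x \<partial>M)" .
    show "R = ennreal (\<integral>x. h x \<partial>M)"
      using weight(3) by (simp add: R)
    show "0 \<le> (\<integral>x. h x \<partial>M)"
      using weight(1) h_nonneg by (intro integral_nonneg_AE) (auto elim: eventually_mono)
  qed
  show "ennreal (norm (lambda_nb M n b - 2 * (\<Sum>k\<le>N. complex_of_real
            ((\<integral>x. Psi k (b * x / real n) / x \<partial>M) / real n ^ (2*k + 1)))))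
      \<le> ennreal (2 * c) * R"
  proof (cases "R = \<infinity>")
    case False
    then have "R < \<infinity>"
      by (simp add: top.not_eq_extremum)
    have "ennreal (norm (lambda_nb M n b - 2 * (\<Sum>k\<le>N. complex_of_real
            ((\<integral>x. Psi k (b * x / real n) / x \<partial>M) / real n ^ (2*k + 1)))))
        \<le> ennreal (2 * c * (\<integral>x. h x \<partial>M))"
      using finite(3)[OF \<open>R < \<infinity>\<close>] by (rule ennreal_leI)
    also have "\<dots> = ennreal (2 * c) * R"
      unfolding finite(4)[OF \<open>R < \<infinity>\<close>] using finite(5)[OF \<open>R < \<infinity>\<close>] \<open>c > 0\<close>
      by (intro ennreal_mult) auto
    finally show ?thesis .
  next
    case True
    with \<open>c > 0\<close> have "ennreal (2 * c) * R = \<infinity>"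
      by (simp add: ennreal_mult_top)
    then show ?thesis
      by simp
  qed
  show "R < \<infinity> \<Longrightarrow> integrable M (\<lambda>x. phi n (b * x) / complex_of_real x)
      \<and> (\<forall>k\<le>N. integrable M (\<lambda>x. Psi k (b * x / real n) / x))"
    by (intro conjI finite(1,2))
qed

theorem corollary3p4:
  fixes N :: nat and \<delta> :: real
  assumes "0 \<le> \<delta>" and "\<delta> < 1/3"
  shows "\<exists>C>0. \<forall>n::nat. n \<ge> 1 \<longrightarrow>
    (\<forall>x::real. x > 0 \<longrightarrow>
       norm (phi n x - (\<Sum>k\<le>N. complex_of_real (Psi k (x / real n) / real n ^ (2*k+1))))
         \<le> C / real n powr (2 * real N + 5/3) * (x powr \<delta> / (1 + x / real n)))
  \<and> (\<forall>(b::real) (M::real measure) (K0::real \<Rightarrow> real).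
       0 < b \<and> b < 1 \<and> sets M = sets borel \<and> (AE x in M. 0 \<le> x) \<and>
       (\<forall>t>0. integrable M (\<lambda>x. exp (- t * x)) \<and>
              (K0 has_real_derivative (- (\<integral>x. exp (- t * x) \<partial>M))) (at t))
     \<longrightarrow>
       (let \<epsilon> = lambda_nb M n b - 2 * (\<Sum>k\<le>N. complex_of_real
                   ((\<integral>x. Psi k (b * x / real n) / x \<partial>M) / real n ^ (2*k+1)));
            R = (\<integral>\<^sup>+x. (if x = 0 then \<infinity> else ennreal (x powr (\<delta> - 1) / (1 + b * x / real n))) \<partial>M)
        in ennreal (norm \<epsilon>) \<le> ennreal (C / real n powr (2 * real N + 5/3)) * R
           \<and> (R < \<infinity> \<longrightarrow> integrable M (\<lambda>x. phi n (b * x) / complex_of_real x)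
                 \<and> (\<forall>k\<le>N. integrable M (\<lambda>x. Psi k (b * x / real n) / x)))))"
proof -
  have \<delta>: "0 \<le> \<delta>" "\<delta> \<le> 1"
    using assms by auto
  obtain C where "C > 0" and phi_bound: "\<And>n x. n \<ge> 1 \<Longrightarrow> x > 0 \<Longrightarrow>
      norm (phi n x - (\<Sum>k\<le>N. complex_of_real (Psi k (x / real n) / real n ^ (2*k+1))))
        \<le> C / real n powr (2 * real N + 5/3) * (x powr \<delta> / (1 + x / real n))"
    using phi_expansion_bound[OF \<delta>, of N] by blast
  show ?thesis
  proof (intro exI[of _ "2 * C"] conjI allI impI, goal_cases)
    case 1
    show ?case
      using \<open>C > 0\<close> by simp
  next
    case (2 n x)
    from phi_bound[OF 2] show ?case
      using \<open>C > 0\<close> 2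
      by (elim order_trans) (intro mult_right_mono divide_right_mono, simp_all add: add_pos_pos)
  next
    case (3 n b M K0)
    then have "0 < b" "b < 1" "sets M = sets borel" "AE x in M. 0 \<le> x"
      by auto
    moreover have "C / real n powr (2 * real N + 5/3) > 0"
      using \<open>C > 0\<close> 3(1) by simp
    ultimately show ?case
      using lambda_nb_expansion_bound[OF _ _ _ _ 3(1) \<delta> _ phi_bound[OF 3(1)]] by (simp add: Let_def)
  qed
qed

end
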